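(* Let $n\ge1$, $k\in[n-1]$, $u,w\in S_n$, and $w_{0,n}=[n,n-1,\dots,1]$. Then $u\xrightarrow[k]{}w$ if and only if $w\,w_{0,n}\xrightarrow{n-k}u\,w_{0,n}$.
   Context: $S_n$ is the symmetric group on $[n]$, with $uv=u\circ v$; $\tau_{i,j}$ is the transposition of $i<j$; $\ell(u)$ is the number of inversions. For $k$, $u\lessdot_k u\tau_{i,j}$ means $i\le k<j$ and $\ell(u\tau_{i,j})=\ell(u)+1$. $u\xrightarrow{k}w$ means there is a chain $u=u_1\lessdot_k\cdots\lessdot_k u_s=w$ ($s\ge1$), $u_{t+1}=u_t\tau_{a_t,b_t}$, with $u_1(a_1)<u_2(a_2)<\cdots<u_{s-1}(a_{s-1})$; equivalently (Sottile) such a chain with $b_1,\dots,b_{s-1}$ pairwise distinct. $u\xrightarrow[k]{}w$ means there is a chain $u=u_1\lessdot_k\cdots\lessdot_k u_s=w$ with $u_{t+1}=u_t\tau_{a_t,b_t}$ and $a_1,\dots,a_{s-1}$ pairwise distinct. *)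

theory Defs
  imports "HOL-Combinatorics.Combinatorics"
begin

text \<open>Permutations of [n] = {1..n} are functions nat => nat with u permutes {1..n}.
  Multiplication is composition (uv = u o v); tau_{i,j} is transpose i j.\<close>

definition inversions :: "nat \<Rightarrow> (nat \<Rightarrow> nat) \<Rightarrow> nat" where
  "inversions n u = card {(i, j). 1 \<le> i \<and> i < j \<and> j \<le> n \<and> u j < u i}"

definition kcover :: "nat \<Rightarrow> nat \<Rightarrow> (nat \<Rightarrow> nat) \<Rightarrow> nat \<Rightarrow> nat \<Rightarrow> bool" where
  "kcover n k u a b \<longleftrightarrow> 1 \<le> a \<and> a \<le> k \<and> k < b \<and> b \<le> n \<and>
     inversions n (u \<circ> transpose a b) = inversions n u + 1"

text \<open>A chain starting at u is given by the list of transpositions (a_t, b_t).\<close>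
fun chain_end :: "(nat \<Rightarrow> nat) \<Rightarrow> (nat \<times> nat) list \<Rightarrow> (nat \<Rightarrow> nat)" where
  "chain_end u [] = u"
| "chain_end u ((a, b) # ps) = chain_end (u \<circ> transpose a b) ps"

fun kchain :: "nat \<Rightarrow> nat \<Rightarrow> (nat \<Rightarrow> nat) \<Rightarrow> (nat \<times> nat) list \<Rightarrow> bool" where
  "kchain n k u [] = True"
| "kchain n k u ((a, b) # ps) = (kcover n k u a b \<and> kchain n k (u \<circ> transpose a b) ps)"

fun chain_vals :: "(nat \<Rightarrow> nat) \<Rightarrow> (nat \<times> nat) list \<Rightarrow> nat list" where
  "chain_vals u [] = []"
| "chain_vals u ((a, b) # ps) = u a # chain_vals (u \<circ> transpose a b) ps"

definition upper_arrow :: "nat \<Rightarrow> nat \<Rightarrow> (nat \<Rightarrow> nat) \<Rightarrow> (nat \<Rightarrow> nat) \<Rightarrow> bool" where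
  "upper_arrow n k u w \<longleftrightarrow> (\<exists>ps. kchain n k u ps \<and> chain_end u ps = w \<and>
       sorted_wrt (<) (chain_vals u ps))"

definition lower_arrow :: "nat \<Rightarrow> nat \<Rightarrow> (nat \<Rightarrow> nat) \<Rightarrow> (nat \<Rightarrow> nat) \<Rightarrow> bool" where
  "lower_arrow n k u w \<longleftrightarrow> (\<exists>ps. kchain n k u ps \<and> chain_end u ps = w \<and>
       distinct (map fst ps))"

definition w0 :: "nat \<Rightarrow> nat \<Rightarrow> nat" where
  "w0 n i = (if 1 \<le> i \<and> i \<le> n then n + 1 - i else i)"

end

theory Submission
  imports Defs
begin

text \<open>
  For injective u, the length of u tau_{a,b} exceeds that of u by exactly one iff u(a) < u(b) and
  no position strictly between a and b carries a value strictly between u(a) and u(b): when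
  u(a) < u(b) the length grows by 1 plus twice the number of such positions. The criterion is
  symmetric under the reflection i -> n + 1 - i of positions, so reading a k-chain from u to w
  backwards and multiplying it on the right by w0 gives an (n-k)-chain from w w0 to u w0 whose
  values u_t(a_t) appear in reverse order. Hence it suffices to show that u has a k-chain to w
  with distinct a_t iff it has one with decreasing values u_t(a_t).
  Decreasing values force distinct a_t, because a position a_t reused later would carry the larger
  value u_t(b_t). Conversely, a chain with distinct a_t is sorted by insertion: two consecutive
  covers whose values are in increasing order involve four distinct positions and can be exchanged.
\<close>

definition inversion_pairs :: "nat \<Rightarrow> (nat \<Rightarrow> nat) \<Rightarrow> (nat \<times> nat) set" where
  "inversion_pairs n v = {(i, j). 1 \<le> i \<and> i < j \<and> j \<le> n \<and> v j < v i}"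

lemma inversions_eq_card: "inversions n v = card (inversion_pairs n v)"
  by (simp add: inversions_def inversion_pairs_def)

lemma finite_inversion_pairs: "finite (inversion_pairs n v)"
  by (rule finite_subset[of _ "{1..n} \<times> {1..n}"]) (auto simp: inversion_pairs_def)

lemma card_inversion_pairs_kept_by_transpose:
  assumes "a \<in> {1..n}" "b \<in> {1..n}"
  defines "t \<equiv> transpose a b"
  shows "card {(i, j) \<in> inversion_pairs n (v \<circ> t). t i < t j} =
         card {(i, j) \<in> inversion_pairs n v. t i < t j}"
proof -
  define h where "h = map_prod t t"
  have "inj h" by (simp add: h_def t_def prod.inj_map inj_transpose)
  have t_range: "x \<in> {1..n} \<Longrightarrow> t x \<in> {1..n}" for x
    using assms by (auto simp: t_def transpose_def)
  have maps_into:
    "h ` {(i, j) \<in> inversion_pairs n (w \<circ> t). t i < t j} \<subseteq> {(i, j) \<in> inversion_pairs n w. t i < t j}"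
    for w
    using t_range by (fastforce simp: h_def t_def inversion_pairs_def)
  have finite: "finite {(i, j) \<in> inversion_pairs n w. t i < t j}" for w
    by (rule finite_subset[OF _ finite_inversion_pairs]) auto
  show ?thesis
    using \<open>inj h\<close> maps_into[of v] maps_into[of "v \<circ> t"] finite
    by (intro card_bij_eq[of h _ _ h]) (auto simp: t_def comp_assoc intro: inj_on_subset)
qed

lemma transpose_reverses_iff:
  fixes a b i j :: nat
  assumes "a < b" "i < j"
  shows "transpose a b j < transpose a b i \<longleftrightarrow> (i = a \<and> j \<le> b) \<or> (a \<le> i \<and> j = b)"
  using assms by (cases "i = a"; cases "j = b") (auto simp: transpose_def)

lemma card_inversion_pairs_reversed_by_transpose:
  assumes "1 \<le> a" "a < b" "b \<le> n"
  defines "t \<equiv> transpose a b"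
  shows "card {(i, j) \<in> inversion_pairs n v. t j < t i} =
         of_bool (v b < v a) + card {c \<in> {a<..<b}. v c < v a} + card {c \<in> {a<..<b}. v b < v c}"
proof -
  define L where "L = {c \<in> {a<..<b}. v c < v a}"
  define H where "H = {c \<in> {a<..<b}. v b < v c}"
  define E where "E = (if v b < v a then {(a, b)} else {})"
  have "t j < t i \<longleftrightarrow> (i = a \<and> j \<le> b) \<or> (a \<le> i \<and> j = b)"
    if "(i, j) \<in> inversion_pairs n v" for i j
    using that assms by (simp add: inversion_pairs_def transpose_reverses_iff t_def)
  then have "{(i, j) \<in> inversion_pairs n v. t j < t i} =
        {(i, j) \<in> inversion_pairs n v. (i = a \<and> j \<le> b) \<or> (a \<le> i \<and> j = b)}"
    by blast
  also have "\<dots> = E \<union> Pair a ` L \<union> (\<lambda>c. (c, b)) ` H"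
    using assms by (auto simp: inversion_pairs_def E_def L_def H_def image_iff le_less)
  finally have reversed:
    "{(i, j) \<in> inversion_pairs n v. t j < t i} = E \<union> Pair a ` L \<union> (\<lambda>c. (c, b)) ` H" .
  have "card (E \<union> Pair a ` L \<union> (\<lambda>c. (c, b)) ` H) = card E + card L + card H"
    by (subst card_Un_disjoint; (subst card_Un_disjoint)?)
      (auto simp: E_def L_def H_def card_image inj_on_def)
  then show ?thesis
    by (simp add: reversed E_def L_def H_def)
qed

lemma inversions_eq_card_kept_plus_reversed:
  fixes t :: "nat \<Rightarrow> nat"
  assumes "inj t"
  shows "inversions n v = card {(i, j) \<in> inversion_pairs n v. t i < t j} +
                          card {(i, j) \<in> inversion_pairs n v. t j < t i}"
proof -
  have t_ne: "t i \<noteq> t j" if "(i, j) \<in> inversion_pairs n v" for i j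
    using that assms by (auto simp: inversion_pairs_def inj_eq)
  then have "card (inversion_pairs n v) = card ({(i, j) \<in> inversion_pairs n v. t i < t j} \<union>
                                  {(i, j) \<in> inversion_pairs n v. t j < t i})"
    by (auto simp: neq_iff intro: arg_cong[where f = card])
  also have "\<dots> = card {(i, j) \<in> inversion_pairs n v. t i < t j} +
                        card {(i, j) \<in> inversion_pairs n v. t j < t i}"
    by (rule card_Un_disjoint) (auto intro: finite_subset[OF _ finite_inversion_pairs])
  finally show ?thesis
    by (simp add: inversions_eq_card)
qed

lemma inversions_transpose:
  fixes v :: "nat \<Rightarrow> nat"
  assumes "inj v" "1 \<le> a" "a < b" "b \<le> n" "v a < v b"
  shows "inversions n (v \<circ> transpose a b) =
         inversions n v + 1 + 2 * card {c \<in> {a<..<b}. v a < v c \<and> v c < v b}"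
proof -
  define t where "t = transpose a b"
  define M where "M = {c \<in> {a<..<b}. v a < v c \<and> v c < v b}"
  have "inj t" by (simp add: t_def inj_transpose)
  have v_ne: "v c \<noteq> v a \<and> v c \<noteq> v b" if "a < c" "c < b" for c
    using that assms(1) by (auto simp: inj_eq)
  have below: "card {c \<in> {a<..<b}. v c < v b} = card {c \<in> {a<..<b}. v c < v a} + card M"
  proof -
    have "{c \<in> {a<..<b}. v c < v b} = {c \<in> {a<..<b}. v c < v a} \<union> M"
      using assms(5) v_ne by (force simp: M_def)
    then show ?thesis by (simp add: card_Un_disjoint M_def disjoint_iff)
  qed
  have above: "card {c \<in> {a<..<b}. v a < v c} = card M + card {c \<in> {a<..<b}. v b < v c}"
  proof -
    have "{c \<in> {a<..<b}. v a < v c} = M \<union> {c \<in> {a<..<b}. v b < v c}"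
      using assms(5) v_ne by (force simp: M_def)
    then show ?thesis by (simp add: card_Un_disjoint M_def disjoint_iff)
  qed
  have "{c \<in> {a<..<b}. (v \<circ> t) c < (v \<circ> t) a} = {c \<in> {a<..<b}. v c < v b}"
       "{c \<in> {a<..<b}. (v \<circ> t) b < (v \<circ> t) c} = {c \<in> {a<..<b}. v a < v c}"
    by (auto simp: t_def)
  then have "card {(i, j) \<in> inversion_pairs n (v \<circ> t). t j < t i} =
        1 + card {c \<in> {a<..<b}. v c < v b} + card {c \<in> {a<..<b}. v a < v c}"
    using card_inversion_pairs_reversed_by_transpose[of a b n "v \<circ> t"] assms
    by (simp add: t_def)
  moreover have "card {(i, j) \<in> inversion_pairs n v. t j < t i} =
        card {c \<in> {a<..<b}. v c < v a} + card {c \<in> {a<..<b}. v b < v c}"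
    using card_inversion_pairs_reversed_by_transpose[of a b n v] assms by (simp add: t_def)
  ultimately show ?thesis
    using inversions_eq_card_kept_plus_reversed[OF \<open>inj t\<close>, of n]
      card_inversion_pairs_kept_by_transpose[of a n b v] assms below above
    by (simp add: t_def M_def)
qed

definition covers :: "nat \<Rightarrow> nat \<Rightarrow> (nat \<Rightarrow> nat) \<Rightarrow> nat \<Rightarrow> nat \<Rightarrow> bool" where
  "covers n k v a b \<longleftrightarrow> 1 \<le> a \<and> a \<le> k \<and> k < b \<and> b \<le> n \<and> v a < v b \<and>
     (\<forall>c \<in> {a<..<b}. \<not> (v a < v c \<and> v c < v b))"

lemma kcover_iff_covers:
  fixes v :: "nat \<Rightarrow> nat"
  assumes "inj v"
  shows "kcover n k v a b \<longleftrightarrow> covers n k v a b"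
proof (cases "1 \<le> a \<and> a \<le> k \<and> k < b \<and> b \<le> n")
  case False
  then show ?thesis by (auto simp: kcover_def covers_def)
next
  case bounds: True
  have "v a \<noteq> v b" using bounds assms by (auto simp: inj_eq)
  then consider "v a < v b" | "v b < v a" by linarith
  then show ?thesis
  proof cases
    case 1
    then show ?thesis
      using inversions_transpose[OF assms, of a b n] bounds by (auto simp: kcover_def covers_def)
  next
    case 2
    define v' where "v' = v \<circ> transpose a b"
    have "inj v'" using assms by (simp add: v'_def inj_compose inj_transpose)
    moreover have "v' a < v' b" using 2 by (simp add: v'_def)
    moreover have "v' \<circ> transpose a b = v" by (simp add: v'_def comp_assoc)
    ultimately have "inversions n v' < inversions n v"
      using inversions_transpose[of v' a b n] bounds by simp
    then show ?thesis using 2 by (auto simp: kcover_def covers_def v'_def)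
  qed
qed

text \<open>Keeping u \<circ> transpose a b folded lets it match the recursion equations of the chain functions.\<close>

declare comp_apply [simp del]

fun cover_chain :: "nat \<Rightarrow> nat \<Rightarrow> (nat \<Rightarrow> nat) \<Rightarrow> (nat \<times> nat) list \<Rightarrow> bool" where
  "cover_chain n k u [] = True"
| "cover_chain n k u ((a, b) # ps) = (covers n k u a b \<and> cover_chain n k (u \<circ> transpose a b) ps)"

lemma kchain_iff_cover_chain:
  fixes v :: "nat \<Rightarrow> nat"
  assumes "inj v"
  shows "kchain n k v ps \<longleftrightarrow> cover_chain n k v ps"
  using assms
proof (induction ps arbitrary: v)
  case (Cons p ps)
  obtain a b where "p = (a, b)" by fastforce
  moreover have "inj (v \<circ> transpose a b)" using Cons.prems by (simp add: inj_compose inj_transpose)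
  ultimately show ?case using Cons.IH[of "v \<circ> transpose a b"] kcover_iff_covers[OF Cons.prems]
    by simp
qed simp

lemma cover_chain_append:
  "cover_chain n k v (ps @ qs) \<longleftrightarrow> cover_chain n k v ps \<and> cover_chain n k (chain_end v ps) qs"
  by (induction v ps rule: chain_end.induct) auto

lemma chain_end_append: "chain_end v (ps @ qs) = chain_end (chain_end v ps) qs"
  by (induction v ps rule: chain_end.induct) auto

lemma chain_vals_append:
  "chain_vals v (ps @ qs) = chain_vals v ps @ chain_vals (chain_end v ps) qs"
  by (induction v ps rule: chain_end.induct) auto

lemma w0_w0: "w0 n \<circ> w0 n = id"
  by (rule ext) (auto simp: w0_def comp_apply)

lemma inj_w0: "inj (w0 n)"
  by (rule inj_on_inverseI[where g = "w0 n"]) (auto simp: w0_def)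

lemma transpose_comp_w0:
  assumes "1 \<le> a" "a < b" "b \<le> n"
  shows "transpose a b \<circ> w0 n = w0 n \<circ> transpose (n + 1 - b) (n + 1 - a)"
proof
  fix x
  consider "x = n + 1 - b" | "x = n + 1 - a" | "x \<notin> {n + 1 - b, n + 1 - a}" by blast
  then show "(transpose a b \<circ> w0 n) x = (w0 n \<circ> transpose (n + 1 - b) (n + 1 - a)) x"
  proof cases
    case 3
    then have "w0 n x \<noteq> a" "w0 n x \<noteq> b" using assms by (auto simp: w0_def)
    then show ?thesis using 3 by (simp add: comp_apply)
  qed (use assms in \<open>auto simp: w0_def comp_apply\<close>)
qed

lemma covers_reflect:
  assumes "covers n k u a b" "k \<le> n"
  shows "covers n (n - k) (u \<circ> transpose a b \<circ> w0 n) (n + 1 - b) (n + 1 - a)"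
proof -
  have ab: "1 \<le> a" "a \<le> k" "k < b" "b \<le> n" "u a < u b"
    and gap: "\<And>c. a < c \<Longrightarrow> c < b \<Longrightarrow> \<not> (u a < u c \<and> u c < u b)"
    using assms by (auto simp: covers_def)
  define v where "v = u \<circ> transpose a b \<circ> w0 n"
  have ends: "v (n + 1 - b) = u a" "v (n + 1 - a) = u b"
    using ab by (auto simp: v_def w0_def comp_apply)
  have "\<not> (v (n + 1 - b) < v c \<and> v c < v (n + 1 - a))" if "c \<in> {n + 1 - b<..<n + 1 - a}" for c
  proof -
    have "v c = u (n + 1 - c)" using ab that by (auto simp: v_def w0_def transpose_def comp_apply)
    moreover have "a < n + 1 - c" "n + 1 - c < b" using ab that by auto
    ultimately show ?thesis using gap ends by simp
  qed
  moreover have "1 \<le> n + 1 - b" "n + 1 - b \<le> n - k" "n - k < n + 1 - a" "n + 1 - a \<le> n"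
    using ab assms(2) by linarith+
  ultimately show ?thesis
    unfolding covers_def v_def[symmetric] using ab(5) ends by simp
qed

fun reflect_pair :: "nat \<Rightarrow> nat \<times> nat \<Rightarrow> nat \<times> nat" where
  "reflect_pair n (a, b) = (n + 1 - b, n + 1 - a)"

lemma cover_chain_reflect:
  assumes "cover_chain n k u ps" "k \<le> n"
  shows "cover_chain n (n - k) (chain_end u ps \<circ> w0 n) (rev (map (reflect_pair n) ps)) \<and>
    chain_end (chain_end u ps \<circ> w0 n) (rev (map (reflect_pair n) ps)) = u \<circ> w0 n \<and>
    chain_vals (chain_end u ps \<circ> w0 n) (rev (map (reflect_pair n) ps)) = rev (chain_vals u ps)"
  using assms(1)
proof (induction ps arbitrary: u)
  case (Cons p ps)
  obtain a b where p: "p = (a, b)" by fastforce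
  with Cons have cov: "covers n k u a b" and IH:
    "cover_chain n (n - k) (chain_end u (p # ps) \<circ> w0 n) (rev (map (reflect_pair n) ps))"
    "chain_end (chain_end u (p # ps) \<circ> w0 n) (rev (map (reflect_pair n) ps)) =
       u \<circ> transpose a b \<circ> w0 n"
    "chain_vals (chain_end u (p # ps) \<circ> w0 n) (rev (map (reflect_pair n) ps)) =
       rev (chain_vals (u \<circ> transpose a b) ps)"
    by simp_all
  have ab: "1 \<le> a" "a < b" "b \<le> n" using cov by (auto simp: covers_def)
  have "u \<circ> transpose a b \<circ> w0 n \<circ> transpose (n + 1 - b) (n + 1 - a) = u \<circ> w0 n"
    by (simp add: transpose_comp_w0[OF ab] comp_assoc)
  moreover have "(u \<circ> transpose a b \<circ> w0 n) (n + 1 - b) = u a"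
    using ab by (auto simp: w0_def comp_apply)
  ultimately show ?case
    using IH covers_reflect[OF cov assms(2)]
    by (simp add: p cover_chain_append chain_end_append chain_vals_append)
qed simp

lemma chain_vals_contains_start_value:
  assumes "cover_chain n k v ps" "p \<le> k" "p \<in> fst ` set ps"
  shows "v p \<in> set (chain_vals v ps)"
  using assms(1,3)
proof (induction ps arbitrary: v)
  case (Cons q ps)
  obtain a b where q: "q = (a, b)" by fastforce
  show ?case
  proof (cases "a = p")
    case False
    then have "p \<in> fst ` set ps" using Cons.prems q by auto
    moreover have "(v \<circ> transpose a b) p = v p"
      using Cons.prems q False assms(2) by (auto simp: covers_def comp_apply)
    ultimately show ?thesis using Cons.IH[of "v \<circ> transpose a b"] Cons.prems q by simp
  qed (simp add: q)
qed simp

lemma distinct_fst_if_decreasing: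
  assumes "cover_chain n k v ps" "sorted_wrt (>) (chain_vals v ps)"
  shows "distinct (map fst ps)"
  using assms
proof (induction ps arbitrary: v)
  case (Cons q ps)
  obtain a b where q: "q = (a, b)" by fastforce
  with Cons.prems have cov: "covers n k v a b" and rest: "cover_chain n k (v \<circ> transpose a b) ps"
    and below: "\<forall>x \<in> set (chain_vals (v \<circ> transpose a b) ps). x < v a"
    and sorted: "sorted_wrt (>) (chain_vals (v \<circ> transpose a b) ps)"
    by simp_all
  have "a \<notin> fst ` set ps"
  proof
    assume "a \<in> fst ` set ps"
    then have "v b \<in> set (chain_vals (v \<circ> transpose a b) ps)"
      using chain_vals_contains_start_value[OF rest] cov by (fastforce simp: covers_def comp_apply)
    then show False using below cov by (fastforce simp: covers_def)
  qed
  then show ?case using Cons.IH[OF rest sorted] q by simp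
qed simp

lemma covers_exchange:
  assumes inj: "inj u" and ab: "covers n k u a b" and cd: "covers n k (u \<circ> transpose a b) c d"
    and "a \<noteq> c" "u a < u c"
  shows "d \<noteq> b" "covers n k u c d" "covers n k (u \<circ> transpose c d) a b"
proof -
  have A: "1 \<le> a" "a \<le> k" "k < b" "b \<le> n" "u a < u b"
    and gapA: "\<And>x. x \<in> {a<..<b} \<Longrightarrow> \<not> (u a < u x \<and> u x < u b)"
    using ab by (auto simp: covers_def)
  have C: "1 \<le> c" "c \<le> k" "k < d" "d \<le> n" using cd by (auto simp: covers_def)
  then have "c \<noteq> b" "d \<noteq> a" using A by auto
  have fix_ab: "(u \<circ> transpose a b) x = u x" if "x \<noteq> a" "x \<noteq> b" for x
    using that by (simp add: comp_apply)
  have fix_cd: "(u \<circ> transpose c d) x = u x" if "x \<noteq> c" "x \<noteq> d" for x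
    using that by (simp add: comp_apply)
  show "d \<noteq> b"
  proof
    assume "d = b"
    then show False
      using cd fix_ab[of c] \<open>c \<noteq> b\<close> \<open>a \<noteq> c\<close> \<open>u a < u c\<close> by (auto simp: covers_def comp_apply)
  qed
  have "u c < u d"
    and gapC: "\<And>x. x \<in> {c<..<d} \<Longrightarrow> \<not> (u c < (u \<circ> transpose a b) x \<and> (u \<circ> transpose a b) x < u d)"
    using cd fix_ab[of c] fix_ab[of d] \<open>c \<noteq> b\<close> \<open>d \<noteq> a\<close> \<open>d \<noteq> b\<close> \<open>a \<noteq> c\<close>
    by (auto simp: covers_def)
  have ne: "u x \<noteq> u y" if "x \<noteq> y" for x y using inj that by (auto simp: inj_eq)
  have b_outside: "\<not> (u c < u b \<and> u b < u d)"
  proof (cases "a < c")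
    case True
    then show ?thesis using gapA[of c] A C \<open>u a < u c\<close> ne[OF \<open>c \<noteq> b\<close>] by auto
  next
    case False
    then show ?thesis using gapC[of a] A C \<open>a \<noteq> c\<close> by (auto simp: comp_apply)
  qed
  have b_below_c: "u b < u c" if "a < c \<or> d < b"
  proof -
    have "\<not> (u a < u c \<and> u c < u b) \<or> \<not> (u a < u d \<and> u d < u b)"
      using that gapA[of c] gapA[of d] A C by auto
    then show ?thesis
      using b_outside \<open>u a < u c\<close> \<open>u c < u d\<close> ne[OF \<open>c \<noteq> b\<close>] ne[OF \<open>d \<noteq> b\<close>] by auto
  qed
  show "covers n k u c d"
    unfolding covers_def
  proof (intro conjI ballI)
    fix x assume x: "x \<in> {c<..<d}"
    show "\<not> (u c < u x \<and> u x < u d)"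
      using gapC[OF x] fix_ab[of x] b_outside \<open>u a < u c\<close> by (cases "x = a \<or> x = b") auto
  qed (use C \<open>u c < u d\<close> in auto)
  have ends: "(u \<circ> transpose c d) a = u a" "(u \<circ> transpose c d) b = u b"
    using fix_cd \<open>a \<noteq> c\<close> \<open>c \<noteq> b\<close> \<open>d \<noteq> a\<close> \<open>d \<noteq> b\<close> by auto
  show "covers n k (u \<circ> transpose c d) a b"
    unfolding covers_def ends
  proof (intro conjI ballI)
    fix x assume x: "x \<in> {a<..<b}"
    show "\<not> (u a < (u \<circ> transpose c d) x \<and> (u \<circ> transpose c d) x < u b)"
      using gapA[OF x] fix_cd[of x] b_below_c x \<open>u c < u d\<close>
      by (cases "x = c \<or> x = d") (auto simp: comp_apply)
  qed (use A in auto)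
qed

lemma transpose_comp_commute:
  "a \<noteq> c \<Longrightarrow> a \<noteq> d \<Longrightarrow> b \<noteq> c \<Longrightarrow> b \<noteq> d \<Longrightarrow>
   transpose a b \<circ> transpose c d = transpose c d \<circ> transpose a b"
  by (rule ext) (auto simp: transpose_def comp_apply)

lemma cover_chain_insert:
  assumes "inj u" "covers n k u a b" "cover_chain n k (u \<circ> transpose a b) ps"
    "a \<notin> fst ` set ps" "sorted_wrt (>) (chain_vals (u \<circ> transpose a b) ps)"
  shows "\<exists>qs. cover_chain n k u qs \<and> chain_end u qs = chain_end (u \<circ> transpose a b) ps \<and>
    sorted_wrt (>) (chain_vals u qs) \<and> fst ` set qs = insert a (fst ` set ps) \<and>
    set (chain_vals u qs) = insert (u a) (set (chain_vals (u \<circ> transpose a b) ps))"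
  using assms
proof (induction ps arbitrary: u a b)
  case Nil
  then show ?case by (intro exI[of _ "[(a, b)]"]) auto
next
  case (Cons q rest)
  obtain c d where q: "q = (c, d)" by fastforce
  have cd: "covers n k (u \<circ> transpose a b) c d"
    and rest: "cover_chain n k (u \<circ> transpose a b \<circ> transpose c d) rest"
    and "a \<noteq> c" "a \<notin> fst ` set rest"
    using Cons.prems q by auto
  have "c \<noteq> b" "d \<noteq> a" using Cons.prems(2) cd by (auto simp: covers_def)
  then have uc: "(u \<circ> transpose a b) c = u c" using \<open>a \<noteq> c\<close> by (simp add: comp_apply)
  have rest_below: "\<forall>x \<in> set (chain_vals (u \<circ> transpose a b \<circ> transpose c d) rest). x < u c"
    and rest_sorted: "sorted_wrt (>) (chain_vals (u \<circ> transpose a b \<circ> transpose c d) rest)"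
    using Cons.prems(5) q uc by auto
  have "u a \<noteq> u c" using Cons.prems(1) \<open>a \<noteq> c\<close> by (simp add: inj_eq)
  then consider "u c < u a" | "u a < u c" by linarith
  then show ?case
  proof cases
    case 1
    then show ?thesis
      using Cons.prems rest_below uc q by (intro exI[of _ "(a, b) # q # rest"]) auto
  next
    case 2
    note exchange = covers_exchange[OF Cons.prems(1,2) cd \<open>a \<noteq> c\<close> 2]
    have "u \<circ> transpose c d \<circ> transpose a b = u \<circ> transpose a b \<circ> transpose c d"
      using transpose_comp_commute[of a c d b] \<open>a \<noteq> c\<close> \<open>c \<noteq> b\<close> \<open>d \<noteq> a\<close> exchange(1)
      by (simp add: comp_assoc)
    moreover have "inj (u \<circ> transpose c d)"
      using Cons.prems(1) by (simp add: inj_compose inj_transpose)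
    ultimately obtain qs where qs: "cover_chain n k (u \<circ> transpose c d) qs"
      "chain_end (u \<circ> transpose c d) qs = chain_end (u \<circ> transpose a b \<circ> transpose c d) rest"
      "sorted_wrt (>) (chain_vals (u \<circ> transpose c d) qs)"
      "fst ` set qs = insert a (fst ` set rest)"
      "set (chain_vals (u \<circ> transpose c d) qs) =
         insert ((u \<circ> transpose c d) a) (set (chain_vals (u \<circ> transpose a b \<circ> transpose c d) rest))"
      using Cons.IH[of "u \<circ> transpose c d" a b] rest exchange(3) \<open>a \<notin> fst ` set rest\<close> rest_sorted
      by auto
    moreover have "(u \<circ> transpose c d) a = u a"
      using \<open>a \<noteq> c\<close> \<open>d \<noteq> a\<close> by (simp add: comp_apply)
    ultimately show ?thesis
      using exchange(2) rest_below 2 q uc by (intro exI[of _ "(c, d) # qs"]) auto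
  qed
qed

lemma cover_chain_sort:
  assumes "inj u" "cover_chain n k u ps" "distinct (map fst ps)"
  shows "\<exists>qs. cover_chain n k u qs \<and> chain_end u qs = chain_end u ps \<and>
    sorted_wrt (>) (chain_vals u qs) \<and> fst ` set qs = fst ` set ps"
  using assms
proof (induction ps arbitrary: u)
  case Nil
  then show ?case by (intro exI[of _ "[]"]) auto
next
  case (Cons p ps)
  obtain a b where p: "p = (a, b)" by fastforce
  have "inj (u \<circ> transpose a b)" using Cons.prems(1) by (simp add: inj_compose inj_transpose)
  then obtain qs where qs: "cover_chain n k (u \<circ> transpose a b) qs"
    "chain_end (u \<circ> transpose a b) qs = chain_end (u \<circ> transpose a b) ps"
    "sorted_wrt (>) (chain_vals (u \<circ> transpose a b) qs)" "fst ` set qs = fst ` set ps"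
    using Cons.IH[of "u \<circ> transpose a b"] Cons.prems p by auto
  moreover have "a \<notin> fst ` set qs" using qs(4) Cons.prems(3) p by auto
  ultimately obtain rs where "cover_chain n k u rs" "chain_end u rs = chain_end (u \<circ> transpose a b) qs"
    "sorted_wrt (>) (chain_vals u rs)" "fst ` set rs = insert a (fst ` set qs)"
    using cover_chain_insert[OF Cons.prems(1) _ qs(1) _ qs(3)] Cons.prems(2) p by auto
  then show ?case using qs p by (intro exI[of _ rs]) auto
qed

definition cover_path ::
  "nat \<Rightarrow> nat \<Rightarrow> (nat \<Rightarrow> nat \<Rightarrow> bool) \<Rightarrow> (nat \<Rightarrow> nat) \<Rightarrow> (nat \<Rightarrow> nat) \<Rightarrow> bool" where
  "cover_path n k R u w \<longleftrightarrow>
     (\<exists>ps. cover_chain n k u ps \<and> chain_end u ps = w \<and> sorted_wrt R (chain_vals u ps))"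

lemma upper_arrow_iff_cover_path:
  "inj u \<Longrightarrow> upper_arrow n k u w \<longleftrightarrow> cover_path n k (<) u w"
  by (simp add: upper_arrow_def cover_path_def kchain_iff_cover_chain)

lemma lower_arrow_iff_cover_path:
  assumes "inj u"
  shows "lower_arrow n k u w \<longleftrightarrow> cover_path n k (>) u w"
proof
  assume "lower_arrow n k u w"
  then obtain ps where "cover_chain n k u ps" "chain_end u ps = w" "distinct (map fst ps)"
    by (auto simp: lower_arrow_def kchain_iff_cover_chain[OF assms])
  then show "cover_path n k (>) u w"
    using cover_chain_sort[OF assms] by (fastforce simp: cover_path_def)
next
  assume "cover_path n k (>) u w"
  then show "lower_arrow n k u w"
    using distinct_fst_if_decreasing
    by (fastforce simp: cover_path_def lower_arrow_def kchain_iff_cover_chain[OF assms])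
qed

lemma cover_path_reflect:
  assumes "cover_path n k R u w" "k \<le> n"
  shows "cover_path n (n - k) (\<lambda>x y. R y x) (w \<circ> w0 n) (u \<circ> w0 n)"
proof -
  obtain ps where ps: "cover_chain n k u ps" "chain_end u ps = w" "sorted_wrt R (chain_vals u ps)"
    using assms(1) by (auto simp: cover_path_def)
  show ?thesis
    unfolding cover_path_def
  proof (intro exI conjI)
    show "cover_chain n (n - k) (w \<circ> w0 n) (rev (map (reflect_pair n) ps))"
      "chain_end (w \<circ> w0 n) (rev (map (reflect_pair n) ps)) = u \<circ> w0 n"
      "sorted_wrt (\<lambda>x y. R y x) (chain_vals (w \<circ> w0 n) (rev (map (reflect_pair n) ps)))"
      using cover_chain_reflect[OF ps(1) assms(2)] ps(2,3) by (simp_all add: sorted_wrt_rev)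
  qed
qed

lemma cover_path_reflect_iff:
  assumes "k \<le> n"
  shows "cover_path n k (>) u w \<longleftrightarrow> cover_path n (n - k) (<) (w \<circ> w0 n) (u \<circ> w0 n)"
proof
  assume "cover_path n (n - k) (<) (w \<circ> w0 n) (u \<circ> w0 n)"
  then have "cover_path n (n - (n - k)) (>) (u \<circ> w0 n \<circ> w0 n) (w \<circ> w0 n \<circ> w0 n)"
    by (rule cover_path_reflect) simp
  then show "cover_path n k (>) u w"
    using assms by (simp add: comp_assoc w0_w0)
qed (use cover_path_reflect[OF _ assms] in auto)

theorem lemma2p31:
  fixes n k :: nat and u w :: "nat \<Rightarrow> nat"
  assumes "1 \<le> n" and "1 \<le> k" and "k \<le> n - 1"
    and "u permutes {1..n}" and "w permutes {1..n}"
  shows "lower_arrow n k u w \<longleftrightarrow> upper_arrow n (n - k) (w \<circ> w0 n) (u \<circ> w0 n)"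
proof -
  have "inj u" "inj (w \<circ> w0 n)"
    using assms(4,5) permutes_inj inj_w0 by (auto intro: inj_compose)
  have "lower_arrow n k u w \<longleftrightarrow> cover_path n k (>) u w"
    using \<open>inj u\<close> by (rule lower_arrow_iff_cover_path)
  also have "\<dots> \<longleftrightarrow> cover_path n (n - k) (<) (w \<circ> w0 n) (u \<circ> w0 n)"
    using assms(3) by (intro cover_path_reflect_iff) simp
  also have "\<dots> \<longleftrightarrow> upper_arrow n (n - k) (w \<circ> w0 n) (u \<circ> w0 n)"
    using \<open>inj (w \<circ> w0 n)\<close> by (rule upper_arrow_iff_cover_path[symmetric])
  finally show ?thesis .
qed

end
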